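(* Let $\mathcal{P}\subset K[x_1,\ldots,x_n]$ be a chordal polynomial set with $x_1<\cdots<x_n$ as a perfect elimination ordering. Consider a successive reduction $\overline{\mathrm{red}}_n(\mathcal{P}),\overline{\mathrm{red}}_{n-1}(\mathcal{P}),\ldots,\overline{\mathrm{red}}_1(\mathcal{P})$. Assume that for each $i=n,\ldots,1$ with $\overline{\mathrm{red}}_{i+1}(\mathcal{P})^{(i)}\neq\emptyset$, the reduction data $(T_i,\mathcal{R}_i)$ used at step $i$ satisfies $\mathrm{supp}(T_i)=\mathrm{supp}\big(\overline{\mathrm{red}}_{i+1}(\mathcal{P})^{(i)}\big)$. Then $G(\overline{\mathrm{red}}_1(\mathcal{P}))=G(\mathcal{P})$.
   Context: Let $K$ be a field and $K[x_1,\ldots,x_n]$ the polynomial ring, with the variables ordered $x_1<\cdots<x_n$. For a polynomial $F$, $\mathrm{supp}(F)$ is the set of variables effectively appearing in $F$. For a set of polynomials $\mathcal{P}$, $\mathrm{supp}(\mathcal{P})=\bigcup_{F\in\mathcal{P}}\mathrm{supp}(F)$. For a nonconstant $F$, $\mathrm{lv}(F)$ is the greatest variable in $\mathrm{supp}(F)$. For a polynomial set $\mathcal{P}$ and $1\le i\le n$, $\mathcal{P}^{(i)}=\{P\in\mathcal{P}:\mathrm{lv}(P)=x_i\}$; constants belong to no $\mathcal{P}^{(i)}$. The associated graph $G(\mathcal{P})$ is the undirected graph whose vertex set is $\mathrm{supp}(\mathcal{P})$, with an edge between distinct $x_i,x_j$ iff some $F\in\mathcal{P}$ has $x_i,x_j\in\mathrm{supp}(F)$.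 For graphs, $G\subseteq G'$ means that $G$ is a subgraph of $G'$, i.e. both the vertex set and the edge set are contained. An ordering of the vertices of a graph is a perfect elimination ordering if, for every vertex $v$, the set consisting of $v$ and all neighbours of $v$ smaller than $v$ is a clique. A polynomial set $\mathcal{P}$ is called chordal with $x_1<\cdots<x_n$ as a perfect elimination ordering if the restriction of this ordering to $\mathrm{supp}(\mathcal{P})$ is a perfect elimination ordering of $G(\mathcal{P})$. Reduction step: let $\mathcal{S}$ be a polynomial set and $1\le i\le n$ with $\mathcal{S}^{(i)}\neq\emptyset$. Reduction data for $(\mathcal{S},i)$ is a pair $(T_i,\mathcal{R}_i)$ such that: - $T_i\in K[x_1,\ldots,x_i]\setminus K[x_1,\ldots,x_{i-1}]$ and $\mathcal{R}_i\subset K[x_1,\ldots,x_{i-1}]$, where $K[x_1,\ldots,x_0]=K$; - $\mathrm{supp}(T_i)\subseteq\mathrm{supp}(\mathcal{S}^{(i)})$ and $\mathrm{supp}(\mathcal{R}_i)\subseteq\mathrm{supp}(\mathcal{S}^{(i)})$. Such a pair arises, for example, from $T_i$ and pseudo-remainders. Given such a pair, $$\mathrm{red}_i(\mathcal{S})=\bigcup_{j>i}\mathcal{S}^{(j)}\ \cup\ \{T_i\}\ \cup\ \bigcup_{j<i}\big(\mathcal{S}^{(j)}\cup\mathcal{R}_i^{(j)}\big).$$ If $\mathcal{S}^{(i)}=\emptyset$, set $\mathrm{red}_i(\mathcal{S})=\bigcup_{j}\mathcal{S}^{(j)}$. Successive reduction: $\overline{\mathrm{red}}_{n+1}(\mathcal{P})=\mathcal{P}$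 and $\overline{\mathrm{red}}_i(\mathcal{P})=\mathrm{red}_i(\overline{\mathrm{red}}_{i+1}(\mathcal{P}))$ for $i=n,\ldots,1$. At each step some reduction data for $(\overline{\mathrm{red}}_{i+1}(\mathcal{P}),i)$ is chosen. *)

theory Defs
  imports "HOL-Library.Poly_Mapping"
begin

text \<open>Multivariate polynomials over K in variables x_1, x_2, ... (indexed by nat):
  a polynomial is a finitely supported map from monomials (exponent vectors,
  finitely supported nat => nat) to coefficients.\<close>
type_synonym 'a mpoly = "(nat \<Rightarrow>\<^sub>0 nat) \<Rightarrow>\<^sub>0 'a"

definition supp :: "'a::zero mpoly \<Rightarrow> nat set" where
  "supp F = (\<Union>m\<in>Poly_Mapping.keys F. Poly_Mapping.keys m)"

definition suppS :: "'a::zero mpoly set \<Rightarrow> nat set" where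
  "suppS P = \<Union> (supp ` P)"

definition lv :: "'a::zero mpoly \<Rightarrow> nat" where
  "lv F = Max (supp F)"

definition level :: "'a::zero mpoly set \<Rightarrow> nat \<Rightarrow> 'a mpoly set" where
  "level P i = {F \<in> P. supp F \<noteq> {} \<and> lv F = i}"

text \<open>Associated graph: (vertex set, edge relation) as a set of ordered pairs (symmetric).\<close>
definition assoc_graph :: "'a::zero mpoly set \<Rightarrow> nat set \<times> (nat \<times> nat) set" where
  "assoc_graph P = (suppS P,
     {(a, b). a \<noteq> b \<and> (\<exists>F\<in>P. a \<in> supp F \<and> b \<in> supp F)})"

definition is_peo :: "nat set \<times> (nat \<times> nat) set \<Rightarrow> bool" where
  "is_peo G = (\<forall>v \<in> fst G.
      (\<forall>a \<in> insert v {u \<in> fst G. u < v \<and> (u, v) \<in> snd G}.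
       \<forall>b \<in> insert v {u \<in> fst G. u < v \<and> (u, v) \<in> snd G}.
         a \<noteq> b \<longrightarrow> (a, b) \<in> snd G))"

definition chordal :: "'a::zero mpoly set \<Rightarrow> bool" where
  "chordal P = is_peo (assoc_graph P)"

definition red_data :: "'a::zero mpoly set \<Rightarrow> nat \<Rightarrow> 'a mpoly \<Rightarrow> 'a mpoly set \<Rightarrow> bool" where
  "red_data S i T R =
     (supp T \<subseteq> {1..i} \<and> i \<in> supp T \<and> (\<forall>F\<in>R. supp F \<subseteq> {1..<i}) \<and>
      supp T \<subseteq> suppS (level S i) \<and> suppS R \<subseteq> suppS (level S i))"

definition red :: "nat \<Rightarrow> 'a::zero mpoly set \<Rightarrow> nat \<Rightarrow> 'a mpoly \<Rightarrow> 'a mpoly set \<Rightarrow> 'a mpoly set" where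
  "red n S i T R =
     (if level S i = {} then (\<Union>j\<in>{1..n}. level S j)
      else (\<Union>j\<in>{i<..n}. level S j) \<union> {T} \<union> (\<Union>j\<in>{1..<i}. level S j \<union> level R j))"

end

theory Submission
  imports Defs
begin

text \<open>
  One reduction step at level i removes the polynomials with leading variable
  x_i and adds T_i and R_i, whose variables all lie in supp(S^(i)). This removes no edge,
  because T_i covers every removed polynomial. It adds no edge either: the variables of
  S^(i) are x_i and neighbours of x_i below it, which form a clique by chordality. Since
  the graph is unchanged, chordality is inherited by the next step.
\<close>

lemma finite_supp: "finite (supp F)"
  unfolding supp_def by auto

lemma lv_in_supp: "supp F \<noteq> {} \<Longrightarrow> lv F \<in> supp F"
  unfolding lv_def by (simp add: finite_supp)

lemma le_lv: "a \<in> supp F \<Longrightarrow> a \<le> lv F"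
  unfolding lv_def by (simp add: finite_supp)

lemma assoc_graph_eqI:
  assumes "\<And>a b. (\<exists>F\<in>P. a \<in> supp F \<and> b \<in> supp F) \<longleftrightarrow> (\<exists>F\<in>P'. a \<in> supp F \<and> b \<in> supp F)"
  shows "assoc_graph P = assoc_graph P'"
proof -
  have "suppS P = suppS P'"
    using assms unfolding suppS_def by blast
  then show ?thesis
    using assms unfolding assoc_graph_def by auto
qed

lemma chordal_level_clique:
  assumes chordal: "chordal S"
    and a: "a \<in> suppS (level S i)" and b: "b \<in> suppS (level S i)"
  shows "\<exists>F\<in>S. a \<in> supp F \<and> b \<in> supp F"
proof -
  obtain Fa where Fa: "Fa \<in> S" "supp Fa \<noteq> {}" "lv Fa = i" "a \<in> supp Fa"
    using a unfolding suppS_def level_def by auto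
  obtain Fb where Fb: "Fb \<in> S" "supp Fb \<noteq> {}" "lv Fb = i" "b \<in> supp Fb"
    using b unfolding suppS_def level_def by auto
  have i_Fa: "i \<in> supp Fa" and i_Fb: "i \<in> supp Fb"
    using lv_in_supp Fa Fb by metis+
  show ?thesis
  proof (cases "a = b \<or> a = i \<or> b = i")
    case True
    then show ?thesis using Fa Fb i_Fa i_Fb by blast
  next
    case False
    let ?V = "fst (assoc_graph S)" and ?E = "snd (assoc_graph S)"
    let ?N = "insert i {u \<in> ?V. u < i \<and> (u, i) \<in> ?E}"
    have "i \<in> ?V"
      using Fa(1) i_Fa unfolding assoc_graph_def suppS_def by auto
    moreover have "a \<in> ?N"
      using False Fa i_Fa le_lv[OF Fa(4)] unfolding assoc_graph_def suppS_def by auto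
    moreover have "b \<in> ?N"
      using False Fb i_Fb le_lv[OF Fb(4)] unfolding assoc_graph_def suppS_def by auto
    ultimately have "(a, b) \<in> ?E"
      using chordal False unfolding chordal_def is_peo_def by blast
    then show ?thesis
      unfolding assoc_graph_def by auto
  qed
qed

lemma mem_redE:
  assumes "F \<in> red n S i T R"
  obtains "F \<in> S" | "level S i \<noteq> {}" "F = T" | "level S i \<noteq> {}" "F \<in> R"
  using assms unfolding red_def level_def by (auto split: if_splits)

lemma mem_redI:
  assumes "F \<in> S" "supp F \<noteq> {}" "supp F \<subseteq> {1..n}" "level S i = {} \<or> lv F \<noteq> i"
  shows "F \<in> red n S i T R"
proof -
  have lv_range: "lv F \<in> {1..n}"
    using lv_in_supp assms(2,3) by blast
  have "F \<in> level S (lv F)"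
    using assms(1,2) unfolding level_def by simp
  then show ?thesis
    using lv_range assms(4) unfolding red_def by (cases "lv F < i") auto
qed

lemma red_data_supp_subset:
  assumes "red_data S i T R" "F = T \<or> F \<in> R"
  shows "supp F \<subseteq> suppS (level S i)" and "supp F \<subseteq> {1..i}"
  using assms unfolding red_data_def suppS_def by fastforce+

lemma red_supp_bounded:
  assumes vars: "\<forall>F\<in>S. supp F \<subseteq> {1..n}" and "i \<le> n"
    and data: "level S i \<noteq> {} \<Longrightarrow> red_data S i T R"
  shows "\<forall>F\<in>red n S i T R. supp F \<subseteq> {1..n}"
proof
  fix F assume "F \<in> red n S i T R"
  then show "supp F \<subseteq> {1..n}"
    by (cases rule: mem_redE)
      (use vars \<open>i \<le> n\<close> data red_data_supp_subset(2)[of S i T R F] in fastforce)+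
qed

lemma assoc_graph_red:
  assumes vars: "\<forall>F\<in>S. supp F \<subseteq> {1..n}" and chordal: "chordal S"
    and data: "level S i \<noteq> {} \<Longrightarrow> red_data S i T R"
    and supp_T: "level S i \<noteq> {} \<Longrightarrow> supp T = suppS (level S i)"
  shows "assoc_graph (red n S i T R) = assoc_graph S"
proof (rule assoc_graph_eqI)
  fix a b
  show "(\<exists>F\<in>red n S i T R. a \<in> supp F \<and> b \<in> supp F) \<longleftrightarrow> (\<exists>F\<in>S. a \<in> supp F \<and> b \<in> supp F)"
  proof
    assume "\<exists>F\<in>red n S i T R. a \<in> supp F \<and> b \<in> supp F"
    then obtain F where F: "F \<in> red n S i T R" "a \<in> supp F" "b \<in> supp F"
      by blast
    then show "\<exists>F\<in>S. a \<in> supp F \<and> b \<in> supp F"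
      by (cases rule: mem_redE)
        (use F data red_data_supp_subset(1)[of S i T R F] chordal_level_clique[OF chordal]
          in blast)+
  next
    assume "\<exists>F\<in>S. a \<in> supp F \<and> b \<in> supp F"
    then obtain F where F: "F \<in> S" "a \<in> supp F" "b \<in> supp F"
      by blast
    show "\<exists>F\<in>red n S i T R. a \<in> supp F \<and> b \<in> supp F"
    proof (cases "level S i \<noteq> {} \<and> lv F = i")
      case True
      then have "F \<in> level S i"
        using F unfolding level_def by auto
      then have "supp F \<subseteq> supp T"
        using True supp_T unfolding suppS_def by auto
      moreover have "T \<in> red n S i T R"
        using True unfolding red_def by auto
      ultimately show ?thesis
        using F by blast
    next
      case False
      then have "F \<in> red n S i T R"
        using F vars by (intro mem_redI) auto
      then show ?thesis
        using F by blast
    qed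
  qed
qed

theorem proposition3p3:
  fixes n :: nat
    and P :: "'a::field mpoly set"
    and Q :: "nat \<Rightarrow> 'a mpoly set"
    and T :: "nat \<Rightarrow> 'a mpoly"
    and R :: "nat \<Rightarrow> 'a mpoly set"
  assumes P_vars: "\<forall>F\<in>P. supp F \<subseteq> {1..n}"
    and P_chordal: "chordal P"
    and Q_init: "Q (n + 1) = P"
    and Q_step: "\<forall>i\<in>{1..n}.
        (level (Q (i + 1)) i \<noteq> {} \<longrightarrow> red_data (Q (i + 1)) i (T i) (R i))
        \<and> Q i = red n (Q (i + 1)) i (T i) (R i)"
    and T_supp: "\<forall>i\<in>{1..n}. level (Q (i + 1)) i \<noteq> {} \<longrightarrow>
        supp (T i) = suppS (level (Q (i + 1)) i)"
  shows "assoc_graph (Q 1) = assoc_graph P"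
proof -
  have "assoc_graph (Q i) = assoc_graph P \<and> (\<forall>F\<in>Q i. supp F \<subseteq> {1..n})"
    if "i \<le> n + 1" "1 \<le> i" for i
    using that
  proof (induction i rule: inc_induct)
    case base
    show ?case using Q_init P_vars by simp
  next
    case (step i)
    then have i: "i \<in> {1..n}" by simp
    note IH = step.IH[simplified]
    have vars: "\<forall>F\<in>Q (i + 1). supp F \<subseteq> {1..n}"
      and chordal: "chordal (Q (i + 1))"
      using IH P_chordal unfolding chordal_def by simp_all
    have Q_i: "Q i = red n (Q (i + 1)) i (T i) (R i)"
      and data: "level (Q (i + 1)) i \<noteq> {} \<Longrightarrow> red_data (Q (i + 1)) i (T i) (R i)"
      and supp_T: "level (Q (i + 1)) i \<noteq> {} \<Longrightarrow> supp (T i) = suppS (level (Q (i + 1)) i)"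
      using Q_step T_supp i by blast+
    have "assoc_graph (Q i) = assoc_graph P"
      using assoc_graph_red[OF vars chordal data supp_T] Q_i IH by simp
    moreover have "\<forall>F\<in>Q i. supp F \<subseteq> {1..n}"
      using red_supp_bounded[OF vars _ data] Q_i i by simp
    ultimately show ?case ..
  qed
  then show ?thesis by simp
qed

end
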